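(* Let $X$ be a reflexive complex Banach space and let $a$ be a positive, densely defined linear operator from $X$ to $X^\ast$ with positive lower bound, i.e. $(ax,x)\ge\gamma\|x\|^2$ for all $x\in\operatorname{dom}a$, for some $\gamma>0$. Then $a$ admits a positive self-adjoint extension $A$ from $X$ to $X^\ast$ with the same lower bound, i.e. $(Ax,x)\ge\gamma\|x\|^2$ for all $x\in\operatorname{dom}A$.
   Context: $X^\ast$ denotes the conjugate dual of $X$: the space of all continuous conjugate-linear functionals on $X$; $X$ is identified with $X^{\ast\ast}$. For $v\in X^\ast$, $x\in X$ write $(v,x):=v(x)$ and $(x,v):=\overline{v(x)}$. For a densely defined linear operator $A$ from $X$ to $X^\ast$: $A$ is positive if $(Ax,x)\ge 0$ for all $x\in\operatorname{dom}A$; the adjoint $A^\ast$ is the operator from $X$ to $X^\ast$ with $\operatorname{dom}A^\ast=\{y\in X: x\mapsto (Ax,y)\text{ is continuous on }\operatorname{dom}A\}$ and $A^\ast y\in X^\ast$ determined by $(x,A^\ast y)=(Ax,y)$ for all $x\in\operatorname{dom}A$; $A$ is self-adjoint if $A=A^\ast$. *)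

theory Defs
  imports "HOL-Analysis.Analysis"
begin

text \<open>A complex Banach space is modelled as a real Banach space type 'a together with a
  complex scalar multiplication sc extending the real one and compatible with the norm.\<close>

definition complex_scaling :: "(complex \<Rightarrow> 'a::real_normed_vector \<Rightarrow> 'a) \<Rightarrow> bool" where
  "complex_scaling sc \<longleftrightarrow>
     (\<forall>r x. sc (complex_of_real r) x = r *\<^sub>R x) \<and>
     (\<forall>c d x. sc (c + d) x = sc c x + sc d x) \<and>
     (\<forall>c x y. sc c (x + y) = sc c x + sc c y) \<and>
     (\<forall>c d x. sc (c * d) x = sc c (sc d x)) \<and>
     (\<forall>c x. norm (sc c x) = cmod c * norm x)"

definition conj_linear :: "(complex \<Rightarrow> 'a \<Rightarrow> 'a) \<Rightarrow> ('a::real_normed_vector \<Rightarrow> complex) \<Rightarrow> bool" where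
  "conj_linear sc v \<longleftrightarrow> (\<forall>x y. v (x + y) = v x + v y) \<and> (\<forall>c x. v (sc c x) = cnj c * v x)"

definition cdual :: "(complex \<Rightarrow> 'a \<Rightarrow> 'a) \<Rightarrow> ('a::real_normed_vector \<Rightarrow> complex) set" where
  "cdual sc = {v. conj_linear sc v \<and> (\<exists>K. \<forall>x. cmod (v x) \<le> K * norm x)}"

text \<open>Reflexivity: every continuous conjugate-linear functional Phi on X* (with its operator
  norm) is given by some x in X via Phi v = (x, v) = conj (v x).\<close>

definition reflexive_space :: "(complex \<Rightarrow> 'a \<Rightarrow> 'a) \<Rightarrow> 'a::real_normed_vector itself \<Rightarrow> bool" where
  "reflexive_space sc _ \<longleftrightarrow>
     (\<forall>\<Phi> :: ('a \<Rightarrow> complex) \<Rightarrow> complex.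
        (\<forall>v\<in>cdual sc. \<forall>w\<in>cdual sc. \<Phi> (\<lambda>x. v x + w x) = \<Phi> v + \<Phi> w) \<and>
        (\<forall>v\<in>cdual sc. \<forall>c. \<Phi> (\<lambda>x. c * v x) = cnj c * \<Phi> v) \<and>
        (\<exists>C. \<forall>v\<in>cdual sc. cmod (\<Phi> v) \<le> C * onorm v)
      \<longrightarrow> (\<exists>x. \<forall>v\<in>cdual sc. \<Phi> v = cnj (v x)))"

text \<open>A linear operator from X to X* with domain D (a complex subspace); values outside D
  are irrelevant.  (A x, y) is written A x y.\<close>

definition dual_operator :: "(complex \<Rightarrow> 'a \<Rightarrow> 'a) \<Rightarrow> 'a set \<Rightarrow> ('a::real_normed_vector \<Rightarrow> 'a \<Rightarrow> complex) \<Rightarrow> bool" where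
  "dual_operator sc D A \<longleftrightarrow>
     0 \<in> D \<and> (\<forall>x\<in>D. \<forall>y\<in>D. x + y \<in> D) \<and> (\<forall>c. \<forall>x\<in>D. sc c x \<in> D) \<and>
     (\<forall>x\<in>D. \<forall>y\<in>D. A (x + y) = (\<lambda>z. A x z + A y z)) \<and>
     (\<forall>c. \<forall>x\<in>D. A (sc c x) = (\<lambda>z. c * A x z)) \<and>
     (\<forall>x\<in>D. A x \<in> cdual sc)"

definition densely_defined :: "'a::real_normed_vector set \<Rightarrow> bool" where
  "densely_defined D \<longleftrightarrow> closure D = UNIV"

definition positive_op :: "'a set \<Rightarrow> ('a \<Rightarrow> 'a \<Rightarrow> complex) \<Rightarrow> bool" where
  "positive_op D A \<longleftrightarrow> (\<forall>x\<in>D. Im (A x x) = 0 \<and> Re (A x x) \<ge> 0)"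

definition lower_bound :: "'a::real_normed_vector set \<Rightarrow> ('a \<Rightarrow> 'a \<Rightarrow> complex) \<Rightarrow> real \<Rightarrow> bool" where
  "lower_bound D A \<gamma> \<longleftrightarrow> (\<forall>x\<in>D. Im (A x x) = 0 \<and> Re (A x x) \<ge> \<gamma> * (norm x)\<^sup>2)"

text \<open>Adjoint: dom A* = {y. x \<mapsto> (A x, y) is continuous on dom A}, and A* y is the element of
  X* with (x, A* y) = conj (A* y x) = (A x, y) for x in dom A (unique by density).\<close>

definition adj_dom :: "'a::real_normed_vector set \<Rightarrow> ('a \<Rightarrow> 'a \<Rightarrow> complex) \<Rightarrow> 'a set" where
  "adj_dom D A = {y. \<exists>K. \<forall>x\<in>D. cmod (A x y) \<le> K * norm x}"

definition is_adjoint_value :: "(complex \<Rightarrow> 'a \<Rightarrow> 'a) \<Rightarrow> 'a set \<Rightarrow> ('a::real_normed_vector \<Rightarrow> 'a \<Rightarrow> complex) \<Rightarrow> 'a \<Rightarrow> ('a \<Rightarrow> complex) \<Rightarrow> bool" where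
  "is_adjoint_value sc D A y w \<longleftrightarrow> w \<in> cdual sc \<and> (\<forall>x\<in>D. cnj (w x) = A x y)"

definition self_adjoint :: "(complex \<Rightarrow> 'a \<Rightarrow> 'a) \<Rightarrow> 'a set \<Rightarrow> ('a::real_normed_vector \<Rightarrow> 'a \<Rightarrow> complex) \<Rightarrow> bool" where
  "self_adjoint sc D A \<longleftrightarrow> adj_dom D A = D \<and> (\<forall>y\<in>D. is_adjoint_value sc D A y (A y))"

end

theory Submission
  imports Defs
begin

text \<open>The form (a x, y) is an inner product on D whose energy norm dominates sqrt gamma times
  the norm of X. For f in X*, near-minimisers over D of the Ritz functional
  (a x, x) - 2 Re f(x) are approximate solutions of a x = f; they form Cauchy sequences in X,
  whose limit sol f defines an injective, conjugate-symmetric, coercive linear map from X* to X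
  inverting a on D. The inverse A of sol on its range extends a with the same lower bound, and
  it is self-adjoint: if x \<mapsto> (A x, y) is bounded, Hahn-Banach extends it to some h in X*,
  and then y = sol h.\<close>

section \<open>Hahn-Banach for functionals dominated by a multiple of the norm\<close>

text \<open>Partially defined real linear functionals are represented by their graphs, which are
  subspaces of X \<times> \<real>.\<close>

definition norm_dominated :: "real \<Rightarrow> ('a::real_normed_vector \<times> real) set \<Rightarrow> bool" where
  "norm_dominated K G \<longleftrightarrow> (\<forall>x r. (x, r) \<in> G \<longrightarrow> r \<le> K * norm x)"

lemma norm_dominated_graph_unique:
  assumes "subspace G" "norm_dominated K G" "(x, r) \<in> G" "(x, s) \<in> G"
  shows "r = s"
proof -
  have "(0, r - s) \<in> G" "(0, s - r) \<in> G"
    using subspace_diff[OF assms(1)] assms(3,4) by force+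
  then have "r - s \<le> 0" "s - r \<le> 0"
    using assms(2) unfolding norm_dominated_def by force+
  then show ?thesis by simp
qed

lemma subspace_Union_chain:
  assumes "C \<in> chains {G. subspace G}" "C \<noteq> {}"
  shows "subspace (\<Union>C)"
  unfolding subspace_def
proof (intro conjI ballI allI)
  have sub: "\<And>G. G \<in> C \<Longrightarrow> subspace G" using chainsD2[OF assms(1)] by blast
  have tot: "\<And>G H. G \<in> C \<Longrightarrow> H \<in> C \<Longrightarrow> G \<subseteq> H \<or> H \<subseteq> G"
    using chainsD[OF assms(1)] by blast
  show "0 \<in> \<Union>C" using assms(2) sub subspace_0 by blast
  show "c *\<^sub>R p \<in> \<Union>C" if "p \<in> \<Union>C" for c p using that sub subspace_scale by blast
  fix p q assume "p \<in> \<Union>C" "q \<in> \<Union>C"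
  then obtain G H where "G \<in> C" "H \<in> C" "p \<in> G" "q \<in> H" by blast
  then show "p + q \<in> \<Union>C" using tot[of G H] sub subspace_add by blast
qed

text \<open>Such c exists because every lower bound r - K * norm (y - x0) lies below every upper
  bound K * norm (z + x0) - s, by the triangle inequality.\<close>

lemma norm_dominated_extension_value:
  assumes M: "subspace M" "norm_dominated K M" and K: "K \<ge> 0"
  obtains c where "\<And>y r \<epsilon>. (y, r) \<in> M \<Longrightarrow> \<bar>\<epsilon>\<bar> = 1 \<Longrightarrow> r + \<epsilon> * c \<le> K * norm (y + \<epsilon> *\<^sub>R x0)"
proof -
  have gap: "r - K * norm (y - x0) \<le> K * norm (z + x0) - s" if "(y, r) \<in> M" "(z, s) \<in> M" for y r z s
  proof -
    have "(y + z, r + s) \<in> M" using subspace_add[OF M(1) that] by simp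
    then have "r + s \<le> K * norm (y + z)" using M(2) unfolding norm_dominated_def by blast
    also have "\<dots> \<le> K * (norm (y - x0) + norm (z + x0))"
      using mult_left_mono[OF norm_triangle_ineq[of "y - x0" "z + x0"] K] by simp
    finally show ?thesis by (simp add: algebra_simps)
  qed
  define L where "L = {r - K * norm (y - x0) | y r. (y, r) \<in> M}"
  have "(0, 0) \<in> M" using subspace_0[OF M(1)] by (simp add: zero_prod_def)
  then have L: "L \<noteq> {}" "bdd_above L"
    using gap unfolding L_def bdd_above_def by blast+
  have "r + \<epsilon> * Sup L \<le> K * norm (y + \<epsilon> *\<^sub>R x0)" if "(y, r) \<in> M" "\<bar>\<epsilon>\<bar> = 1" for y r \<epsilon>
  proof (cases "\<epsilon> = 1")
    case True
    have "Sup L \<le> K * norm (y + x0) - r"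
      using L(1) gap[OF _ that(1)] unfolding L_def by (auto intro!: cSup_least)
    then show ?thesis using True by simp
  next
    case False
    then have "\<epsilon> = -1" using that(2) by linarith
    moreover have "r - K * norm (y - x0) \<le> Sup L"
      using that(1) L(2) unfolding L_def by (blast intro: cSup_upper)
    ultimately show ?thesis by simp
  qed
  then show thesis by (rule that)
qed

lemma norm_dominated_span_insert:
  assumes M: "subspace M" "norm_dominated K M"
    and c: "\<And>y r \<epsilon>. (y, r) \<in> M \<Longrightarrow> \<bar>\<epsilon>\<bar> = 1 \<Longrightarrow> r + \<epsilon> * c \<le> K * norm (y + \<epsilon> *\<^sub>R x0)"
  shows "norm_dominated K (span (insert (x0, c) M))"
  unfolding norm_dominated_def
proof (clarify)
  fix x r assume "(x, r) \<in> span (insert (x0, c) M)"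
  then obtain t where t: "(x - t *\<^sub>R x0, r - t * c) \<in> M"
    unfolding span_insert span_eq_iff[THEN iffD2, OF M(1)] by auto
  show "r \<le> K * norm x"
  proof (cases "t = 0")
    case True
    then show ?thesis using t M(2) unfolding norm_dominated_def by auto
  next
    case False
    define u where "u = \<bar>t\<bar>"
    have u: "u > 0" "t / u = sgn t" using False unfolding u_def by (simp_all add: real_sgn_eq)
    have "((1 / u) *\<^sub>R (x - t *\<^sub>R x0), (1 / u) * (r - t * c)) \<in> M"
      using subspace_scale[OF M(1) t, of "1 / u"] by simp
    then have "(1 / u) * (r - t * c) + sgn t * c \<le> K * norm ((1 / u) *\<^sub>R (x - t *\<^sub>R x0) + sgn t *\<^sub>R x0)"
      using False by (intro c) simp_all
    also have "(1 / u) * (r - t * c) + sgn t * c = r / u"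
      using u(1) by (simp add: field_simps flip: u(2))
    also have "(1 / u) *\<^sub>R (x - t *\<^sub>R x0) + sgn t *\<^sub>R x0 = (1 / u) *\<^sub>R x"
      using u(1) by (simp add: algebra_simps flip: u(2))
    finally show ?thesis using u(1) by (simp add: divide_le_cancel)
  qed
qed

lemma norm_dominated_total_extension:
  fixes G0 :: "('a::real_normed_vector \<times> real) set"
  assumes G0: "subspace G0" "norm_dominated K G0" and K: "K \<ge> 0"
  obtains M where "subspace M" "norm_dominated K M" "G0 \<subseteq> M" "\<And>x. \<exists>r. (x, r) \<in> M"
proof -
  define F where "F = {G. subspace G \<and> norm_dominated K G \<and> G0 \<subseteq> G}"
  have "\<forall>C\<in>chains F. \<exists>U\<in>F. \<forall>G\<in>C. G \<subseteq> U"
  proof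
    fix C assume C: "C \<in> chains F"
    show "\<exists>U\<in>F. \<forall>G\<in>C. G \<subseteq> U"
    proof (cases "C = {}")
      case True
      then show ?thesis using G0 unfolding F_def by blast
    next
      case False
      have "C \<in> chains {G. subspace G}" using C unfolding chains_def F_def by blast
      then have "subspace (\<Union>C)" using False by (rule subspace_Union_chain)
      moreover have "norm_dominated K (\<Union>C)" "G0 \<subseteq> \<Union>C"
        using chainsD2[OF C] False unfolding F_def norm_dominated_def by blast+
      ultimately show ?thesis unfolding F_def by blast
    qed
  qed
  from Zorn_Lemma2[OF this] obtain M where "M \<in> F" and M_max: "\<forall>G\<in>F. M \<subseteq> G \<longrightarrow> G = M"
    by blast
  then have M: "subspace M" "norm_dominated K M" "G0 \<subseteq> M" unfolding F_def by auto
  have total: "\<exists>r. (x, r) \<in> M" for x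
  proof -
    obtain c where c: "\<And>y r \<epsilon>. (y, r) \<in> M \<Longrightarrow> \<bar>\<epsilon>\<bar> = 1 \<Longrightarrow> r + \<epsilon> * c \<le> K * norm (y + \<epsilon> *\<^sub>R x)"
      using norm_dominated_extension_value[OF M(1,2) K] by blast
    have sup: "insert (x, c) M \<subseteq> span (insert (x, c) M)" by (rule span_superset)
    then have "span (insert (x, c) M) \<in> F"
      using norm_dominated_span_insert[OF M(1,2) c] M(3) unfolding F_def by blast
    with sup have "span (insert (x, c) M) = M" using M_max by blast
    then show ?thesis using sup by blast
  qed
  then show thesis using that M by blast
qed

lemma real_hahn_banach:
  fixes G0 :: "('a::real_normed_vector \<times> real) set"
  assumes "subspace G0" "norm_dominated K G0" "K \<ge> 0"
  obtains \<phi> where "linear \<phi>" "\<And>x r. (x, r) \<in> G0 \<Longrightarrow> \<phi> x = r" "\<And>x. \<phi> x \<le> K * norm x"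
proof -
  obtain M where M: "subspace M" "norm_dominated K M" "G0 \<subseteq> M" and total: "\<And>x. \<exists>r. (x, r) \<in> M"
    using norm_dominated_total_extension[OF assms] by blast
  define \<phi> where "\<phi> x = (SOME r. (x, r) \<in> M)" for x
  have graph: "(x, \<phi> x) \<in> M" for x unfolding \<phi>_def using total by (rule someI_ex)
  have \<phi>_eq: "\<phi> x = r" if "(x, r) \<in> M" for x r
    using norm_dominated_graph_unique[OF M(1,2) graph that] .
  show thesis
  proof
    show "linear \<phi>"
    proof
      show "\<phi> (x + y) = \<phi> x + \<phi> y" for x y
        using \<phi>_eq subspace_add[OF M(1) graph graph] by simp
      show "\<phi> (c *\<^sub>R x) = c *\<^sub>R \<phi> x" for c x
        using \<phi>_eq subspace_scale[OF M(1) graph] by simp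
    qed
    show "\<phi> x = r" if "(x, r) \<in> G0" for x r using \<phi>_eq M(3) that by blast
    show "\<phi> x \<le> K * norm x" for x using graph M(2) unfolding norm_dominated_def by blast
  qed
qed

section \<open>Conjugate-linear functionals\<close>

lemma cnj_cis_Arg_mult: "cnj (cis (Arg z)) * z = complex_of_real (cmod z)"
  by (metis cis_neq_zero divide_conv_cnj mult.commute nonzero_mult_div_cancel_right norm_cis
      rcis_cmod_Arg rcis_def)

locale complex_structure =
  fixes sc :: "complex \<Rightarrow> 'a::real_normed_vector \<Rightarrow> 'a"
  assumes complex_scaling: "complex_scaling sc"
begin

lemma sc_of_real: "sc (complex_of_real r) x = r *\<^sub>R x"
  and sc_add_left: "sc (c + d) x = sc c x + sc d x"
  and sc_add_right: "sc c (x + y) = sc c x + sc c y"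
  and sc_mult: "sc (c * d) x = sc c (sc d x)"
  and norm_sc: "norm (sc c x) = cmod c * norm x"
  using complex_scaling unfolding complex_scaling_def by blast+

lemma sc_scaleR: "sc c (r *\<^sub>R x) = r *\<^sub>R sc c x"
  using sc_mult[of c "complex_of_real r" x] sc_mult[of "complex_of_real r" c x]
  by (simp add: sc_of_real mult.commute)

lemma bounded_linear_sc: "bounded_linear (sc c)"
  by (rule bounded_linear_intro[of _ "cmod c"]) (simp_all add: sc_add_right sc_scaleR norm_sc mult.commute)

lemma sc_ii: "sc \<i> (sc \<i> x) = - x"
  using sc_mult[of \<i> \<i> x] sc_of_real[of "-1" x] by simp

lemma sc_Re_Im: "sc c x = Re c *\<^sub>R x + Im c *\<^sub>R sc \<i> x"
proof -
  have "complex_of_real (Re c) + complex_of_real (Im c) * \<i> = c"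
    by (simp add: complex_eq_iff)
  then have "sc c x = sc (complex_of_real (Re c) + complex_of_real (Im c) * \<i>) x"
    by simp
  also have "\<dots> = Re c *\<^sub>R x + Im c *\<^sub>R sc \<i> x"
    by (simp only: sc_add_left sc_mult sc_of_real)
  finally show ?thesis .
qed

lemma cdualD:
  assumes "f \<in> cdual sc"
  shows cdual_add: "f (x + y) = f x + f y" and cdual_sc: "f (sc c x) = cnj c * f x"
  using assms unfolding cdual_def conj_linear_def by auto

lemma cdual_zero: "f \<in> cdual sc \<Longrightarrow> f 0 = 0"
  using cdual_add[of f 0 0] by simp

lemma cdual_scaleR: "f \<in> cdual sc \<Longrightarrow> f (r *\<^sub>R x) = complex_of_real r * f x"
  using cdual_sc[of f "complex_of_real r"] by (simp add: sc_of_real)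

lemma cdualI:
  assumes "\<And>x y. f (x + y) = f x + f y" "\<And>c x. f (sc c x) = cnj c * f x"
    and "\<And>x. cmod (f x) \<le> K * norm x"
  shows "f \<in> cdual sc"
  using assms unfolding cdual_def conj_linear_def by blast

lemma cdual_bounded_linear:
  assumes "f \<in> cdual sc"
  shows "bounded_linear f"
proof
  show "f (x + y) = f x + f y" for x y using cdual_add[OF assms] .
  show "f (r *\<^sub>R x) = r *\<^sub>R f x" for r x
    using cdual_sc[OF assms, of "complex_of_real r"] by (simp add: sc_of_real scaleR_conv_of_real)
  show "\<exists>K. \<forall>x. norm (f x) \<le> norm x * K"
    using assms unfolding cdual_def by (auto simp: mult.commute)
qed

lemma cdual_bound:
  assumes "f \<in> cdual sc"
  obtains K where "K \<ge> 0" "\<And>x. cmod (f x) \<le> K * norm x"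
  using bounded_linear.nonneg_bounded[OF cdual_bounded_linear[OF assms]] by (auto simp: mult.commute)

lemma cdual_add_closed:
  assumes "f \<in> cdual sc" "g \<in> cdual sc"
  shows "(\<lambda>x. f x + g x) \<in> cdual sc"
proof -
  obtain K L where "\<And>x. cmod (f x) \<le> K * norm x" "\<And>x. cmod (g x) \<le> L * norm x"
    using cdual_bound assms by metis
  then have "cmod (f x + g x) \<le> (K + L) * norm x" for x
    by (smt (verit) distrib_right norm_triangle_ineq)
  then show ?thesis
    by (rule cdualI[rotated 2]) (simp_all add: cdualD[OF assms(1)] cdualD[OF assms(2)] algebra_simps)
qed

lemma cdual_mult_closed:
  assumes "f \<in> cdual sc"
  shows "(\<lambda>x. c * f x) \<in> cdual sc"
proof -
  obtain K where "\<And>x. cmod (f x) \<le> K * norm x" using cdual_bound assms by metis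
  then have "cmod (c * f x) \<le> (cmod c * K) * norm x" for x
    by (simp add: norm_mult mult.assoc mult_left_mono)
  then show ?thesis
    by (rule cdualI[rotated 2]) (simp_all add: cdualD[OF assms] algebra_simps)
qed

lemma cdual_eq_on_dense:
  assumes "f \<in> cdual sc" "g \<in> cdual sc" "densely_defined D" "\<And>x. x \<in> D \<Longrightarrow> f x = g x"
  shows "f = g"
proof -
  have "closed {x. f x = g x}"
    by (intro closed_Collect_eq linear_continuous_on cdual_bounded_linear assms(1,2))
  then have "closure D \<subseteq> {x. f x = g x}" using assms(4) by (intro closure_minimal) auto
  then show ?thesis using assms(3) unfolding densely_defined_def by auto
qed

lemma complexify_cdual:
  assumes \<phi>: "linear \<phi>" and bound: "\<And>x. \<phi> x \<le> K * norm x"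
  shows "(\<lambda>x. complex_of_real (\<phi> x) + \<i> * complex_of_real (\<phi> (sc \<i> x))) \<in> cdual sc"
    (is "?g \<in> _")
proof -
  have add: "?g (x + y) = ?g x + ?g y" for x y
    by (simp add: sc_add_right linear_add[OF \<phi>] distrib_left)
  have sc: "?g (sc c x) = cnj c * ?g x" for c x
  proof -
    have "\<phi> (sc c x) = Re c * \<phi> x + Im c * \<phi> (sc \<i> x)"
      by (subst sc_Re_Im) (simp add: linear_add[OF \<phi>] linear_scale[OF \<phi>])
    moreover have "sc \<i> (sc c x) = Re c *\<^sub>R sc \<i> x - Im c *\<^sub>R x"
      by (subst sc_Re_Im[of c x]) (simp add: sc_add_right sc_scaleR sc_ii)
    then have "\<phi> (sc \<i> (sc c x)) = Re c * \<phi> (sc \<i> x) - Im c * \<phi> x"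
      by (simp add: linear_diff[OF \<phi>] linear_scale[OF \<phi>])
    ultimately show ?thesis by (simp add: complex_eq_iff algebra_simps)
  qed
  have "cmod (?g x) \<le> K * norm x" for x
  proof -
    define c where "c = cis (Arg (?g x))"
    have "complex_of_real (cmod (?g x)) = ?g (sc c x)"
      unfolding sc c_def by (rule cnj_cis_Arg_mult[symmetric])
    then have "cmod (?g x) = \<phi> (sc c x)" by (simp add: complex_eq_iff)
    also have "\<dots> \<le> K * norm x" using bound[of "sc c x"] by (simp add: norm_sc c_def)
    finally show ?thesis .
  qed
  then show ?thesis using add sc by (intro cdualI)
qed

lemma cdual_extension:
  assumes S: "0 \<in> S" "\<And>x y. x \<in> S \<Longrightarrow> y \<in> S \<Longrightarrow> x + y \<in> S" "\<And>c x. x \<in> S \<Longrightarrow> sc c x \<in> S"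
    and w: "\<And>x y. x \<in> S \<Longrightarrow> y \<in> S \<Longrightarrow> w (x + y) = w x + w y"
      "\<And>c x. x \<in> S \<Longrightarrow> w (sc c x) = cnj c * w x"
    and bound: "\<And>x. x \<in> S \<Longrightarrow> cmod (w x) \<le> K * norm x"
  obtains g where "g \<in> cdual sc" "\<And>x. x \<in> S \<Longrightarrow> g x = w x"
proof -
  define G0 where "G0 = (\<lambda>x. (x, Re (w x))) ` S"
  have scaleR_S: "r *\<^sub>R x \<in> S" and w_scaleR: "w (r *\<^sub>R x) = complex_of_real r * w x" if "x \<in> S" for r x
    using S(3)[OF that, of "complex_of_real r"] w(2)[OF that, of "complex_of_real r"]
    by (simp_all add: sc_of_real)
  have "subspace G0"
    unfolding subspace_def
  proof (intro conjI ballI allI)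
    show "0 \<in> G0" unfolding G0_def using S(1) w(1)[OF S(1) S(1)] by (force simp: zero_prod_def)
    show "p + q \<in> G0" if "p \<in> G0" "q \<in> G0" for p q
      using that S(2) w(1) unfolding G0_def by force
    show "r *\<^sub>R p \<in> G0" if "p \<in> G0" for r p
      using that scaleR_S w_scaleR unfolding G0_def by force
  qed
  moreover have "norm_dominated (max K 0) G0"
    unfolding norm_dominated_def G0_def
    using bound complex_Re_le_cmod by (force intro: order_trans mult_right_mono)
  ultimately obtain \<phi> where \<phi>: "linear \<phi>" "\<And>x r. (x, r) \<in> G0 \<Longrightarrow> \<phi> x = r" "\<And>x. \<phi> x \<le> max K 0 * norm x"
    using real_hahn_banach by (metis max.cobounded2)
  have "complex_of_real (\<phi> x) + \<i> * complex_of_real (\<phi> (sc \<i> x)) = w x" if "x \<in> S" for x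
  proof -
    have "\<phi> x = Re (w x)" "\<phi> (sc \<i> x) = Re (w (sc \<i> x))"
      using \<phi>(2) S(3) that unfolding G0_def by blast+
    then show ?thesis using w(2)[OF that, of \<i>] by (simp add: complex_eq_iff)
  qed
  then show thesis using that complexify_cdual[OF \<phi>(1,3)] by blast
qed

lemma cdual_separates:
  assumes "u \<noteq> 0"
  obtains h where "h \<in> cdual sc" "h u \<noteq> 0"
proof -
  have "norm_dominated 1 (span {(u, norm u)})"
    unfolding norm_dominated_def span_singleton
    by (auto intro!: mult_right_mono)
  then obtain \<phi> where \<phi>: "linear \<phi>" "\<And>x r. (x, r) \<in> span {(u, norm u)} \<Longrightarrow> \<phi> x = r"
    "\<And>x. \<phi> x \<le> 1 * norm x"
    by (rule real_hahn_banach[OF subspace_span]) auto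
  have "\<phi> u = norm u" using \<phi>(2) span_base by blast
  then have "Re (complex_of_real (\<phi> u) + \<i> * complex_of_real (\<phi> (sc \<i> u))) \<noteq> 0"
    using assms by simp
  then show thesis using that complexify_cdual[OF \<phi>(1,3)] by fastforce
qed

lemma self_adjointI:
  assumes A: "dual_operator sc D A" and herm: "\<And>x y. x \<in> D \<Longrightarrow> y \<in> D \<Longrightarrow> A x y = cnj (A y x)"
    and adj: "adj_dom D A \<subseteq> D"
  shows "self_adjoint sc D A"
proof -
  have A_cdual: "A y \<in> cdual sc" if "y \<in> D" for y using A that unfolding dual_operator_def by blast
  have "y \<in> adj_dom D A" if y: "y \<in> D" for y
  proof -
    obtain K where K: "\<And>x. cmod (A y x) \<le> K * norm x" using cdual_bound[OF A_cdual[OF y]] by blast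
    have "cmod (A x y) \<le> K * norm x" if "x \<in> D" for x using herm[OF that y] K[of x] by simp
    then show ?thesis unfolding adj_dom_def by blast
  qed
  then have "adj_dom D A = D" using adj by blast
  moreover have "is_adjoint_value sc D A y (A y)" if "y \<in> D" for y
    unfolding is_adjoint_value_def using A_cdual[OF that] herm[OF _ that] by simp
  ultimately show ?thesis unfolding self_adjoint_def by blast
qed

end

section \<open>The Friedrichs extension\<close>

lemma discriminant_le:
  fixes e R Q :: real
  assumes "Q > 0" and "\<And>t. 0 \<le> e + 2 * t * R + t\<^sup>2 * Q"
  shows "R\<^sup>2 \<le> e * Q"
proof -
  have "0 \<le> e + 2 * (- R / Q) * R + (- R / Q)\<^sup>2 * Q" by (rule assms(2))
  also have "\<dots> = (e * Q - R\<^sup>2) / Q" using assms(1) by (simp add: field_simps power2_eq_square)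
  finally show ?thesis using assms(1) by (simp add: zero_le_divide_iff)
qed

lemma norm_add_squared_le: "(norm (u + v))\<^sup>2 \<le> 2 * ((norm u)\<^sup>2 + (norm v)\<^sup>2)"
proof -
  have "(norm (u + v))\<^sup>2 \<le> (norm u + norm v)\<^sup>2"
    by (simp add: power_mono norm_triangle_ineq)
  also have "\<dots> \<le> 2 * ((norm u)\<^sup>2 + (norm v)\<^sup>2)"
    using sum_squares_ge_zero[of "norm u - norm v" 0] by (simp add: power2_eq_square algebra_simps)
  finally show ?thesis .
qed

lemma square_le_mult_imp_le: "(x::real)\<^sup>2 \<le> b * x \<Longrightarrow> 0 \<le> x \<Longrightarrow> 0 \<le> b \<Longrightarrow> x \<le> b"
  by (cases "x = 0") (auto simp: power2_eq_square)

definition tol :: "nat \<Rightarrow> real" where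
  "tol n = inverse (real (Suc n))"

lemma tol_pos: "0 < tol n"
  and tol_le_1: "tol n \<le> 1"
  and tol_LIMSEQ: "tol \<longlonglongrightarrow> 0"
  unfolding tol_def using LIMSEQ_inverse_real_of_nat by (simp_all add: inverse_le_1_iff)

lemma squared_norm_bound_tendsto_zero:
  assumes "\<And>n. (norm (U n))\<^sup>2 \<le> e n * M" "e \<longlonglongrightarrow> 0" "0 \<le> M"
  shows "U \<longlonglongrightarrow> 0"
proof (rule Lim_null_comparison)
  show "\<forall>\<^sub>F n in sequentially. norm (U n) \<le> sqrt (e n * M)"
    using assms(1) by (simp add: real_le_rsqrt)
  show "(\<lambda>n. sqrt (e n * M)) \<longlonglongrightarrow> 0"
    using tendsto_real_sqrt[OF tendsto_mult_left_zero[OF assms(2)]] by simp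
qed

locale friedrichs = complex_structure sc for sc :: "complex \<Rightarrow> 'a::banach \<Rightarrow> 'a" +
  fixes D :: "'a set" and a :: "'a \<Rightarrow> 'a \<Rightarrow> complex" and \<gamma> :: real
  assumes dual_operator: "dual_operator sc D a" and dense: "densely_defined D"
    and gamma_pos: "\<gamma> > 0" and lower_bound: "lower_bound D a \<gamma>"
begin

lemma zero_in_D: "0 \<in> D"
  and add_in_D: "x \<in> D \<Longrightarrow> y \<in> D \<Longrightarrow> x + y \<in> D"
  and sc_in_D: "x \<in> D \<Longrightarrow> sc c x \<in> D"
  and a_add: "x \<in> D \<Longrightarrow> y \<in> D \<Longrightarrow> a (x + y) w = a x w + a y w"
  and a_sc: "x \<in> D \<Longrightarrow> a (sc c x) w = c * a x w"
  and a_cdual: "x \<in> D \<Longrightarrow> a x \<in> cdual sc"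
  using dual_operator unfolding dual_operator_def by simp_all

lemma scaleR_in_D: "x \<in> D \<Longrightarrow> r *\<^sub>R x \<in> D"
  using sc_in_D[of x "complex_of_real r"] by (simp add: sc_of_real)

lemma diff_in_D: "x \<in> D \<Longrightarrow> y \<in> D \<Longrightarrow> x - y \<in> D"
  using add_in_D[of x "(-1) *\<^sub>R y"] scaleR_in_D[of y "-1"] by simp

lemma a_scaleR: "x \<in> D \<Longrightarrow> a (r *\<^sub>R x) w = complex_of_real r * a x w"
  using a_sc[of x "complex_of_real r"] by (simp add: sc_of_real)

lemma a_diff: "x \<in> D \<Longrightarrow> y \<in> D \<Longrightarrow> a (x - y) w = a x w - a y w"
  using a_add[of x "(-1) *\<^sub>R y"] a_scaleR[of y "-1"] scaleR_in_D[of y "-1"] by simp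

lemma a_right_add: "x \<in> D \<Longrightarrow> a x (v + w) = a x v + a x w"
  and a_right_sc: "x \<in> D \<Longrightarrow> a x (sc c w) = cnj c * a x w"
  using cdualD[OF a_cdual] by blast+

lemma a_right_scaleR: "x \<in> D \<Longrightarrow> a x (r *\<^sub>R w) = complex_of_real r * a x w"
  using a_right_sc[of x "complex_of_real r"] by (simp add: sc_of_real)

definition energy :: "'a \<Rightarrow> real" where
  "energy x = Re (a x x)"

lemma a_self: "x \<in> D \<Longrightarrow> a x x = complex_of_real (energy x)"
  using lower_bound unfolding lower_bound_def energy_def by (simp add: complex_eq_iff)

lemma energy_lower: "x \<in> D \<Longrightarrow> \<gamma> * (norm x)\<^sup>2 \<le> energy x"
  using lower_bound unfolding lower_bound_def energy_def by blast

lemma energy_nonneg: "x \<in> D \<Longrightarrow> 0 \<le> energy x"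
  using energy_lower[of x] gamma_pos by (smt (verit) mult_nonneg_nonneg zero_le_power2)

lemma energy_pos: "x \<in> D \<Longrightarrow> x \<noteq> 0 \<Longrightarrow> 0 < energy x"
  using energy_lower[of x] gamma_pos by (smt (verit) mult_pos_pos zero_less_norm_iff zero_less_power)

text \<open>Polarization: the form is hermitian because its diagonal is real.\<close>

lemma a_hermitian:
  assumes x: "x \<in> D" and y: "y \<in> D"
  shows "a x y = cnj (a y x)"
proof -
  have Im_sym: "Im (a u v + a v u) = 0" if u: "u \<in> D" and v: "v \<in> D" for u v
  proof -
    have "a u v + a v u = a (u + v) (u + v) - a u u - a v v"
      using a_add[OF u v] a_right_add[OF u] a_right_add[OF v] by simp
    then show ?thesis using a_self[OF add_in_D[OF u v]] a_self[OF u] a_self[OF v] by simp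
  qed
  have "Im (a x y + a y x) = 0" by (rule Im_sym[OF x y])
  moreover have "Im (a x (sc \<i> y) + a (sc \<i> y) x) = 0" by (rule Im_sym[OF x sc_in_D[OF y]])
  then have "Re (a y x) = Re (a x y)" using a_right_sc[OF x, of \<i> y] a_sc[OF y, of \<i> x] by simp
  ultimately show ?thesis by (simp add: complex_eq_iff)
qed

lemma energy_sc:
  assumes "x \<in> D"
  shows "energy (sc c x) = (cmod c)\<^sup>2 * energy x"
proof -
  have "a (sc c x) (sc c x) = (c * cnj c) * a x x"
    using a_sc[OF assms] a_right_sc[OF assms] by simp
  also have "c * cnj c = complex_of_real ((cmod c)\<^sup>2)" by (rule complex_norm_square[symmetric])
  finally show ?thesis unfolding energy_def using a_self[OF assms] by simp
qed

lemma energy_add_scaleR: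
  assumes x: "x \<in> D" and w: "w \<in> D"
  shows "energy (x + t *\<^sub>R w) = energy x + 2 * t * Re (a x w) + t\<^sup>2 * energy w"
proof -
  have "a (x + t *\<^sub>R w) (x + t *\<^sub>R w) =
      a x x + complex_of_real t * (a x w + a w x) + complex_of_real (t\<^sup>2) * a w w"
    using a_add[OF x scaleR_in_D[OF w]] a_right_add[OF x] a_right_add[OF scaleR_in_D[OF w]]
      a_scaleR[OF w] a_right_scaleR[OF x] a_right_scaleR[OF w]
    by (simp add: algebra_simps power2_eq_square)
  then show ?thesis
    using a_hermitian[OF w x] unfolding energy_def by (simp add: algebra_simps)
qed

text \<open>The residual a x - f has squared dual energy norm at most e.\<close>

definition approx_sol :: "('a \<Rightarrow> complex) \<Rightarrow> 'a \<Rightarrow> real \<Rightarrow> bool" where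
  "approx_sol f x e \<longleftrightarrow> x \<in> D \<and> (\<forall>w\<in>D. (cmod (a x w - f w))\<^sup>2 \<le> e * energy w)"

definition ritz :: "('a \<Rightarrow> complex) \<Rightarrow> 'a \<Rightarrow> real" where
  "ritz f x = energy x - 2 * Re (f x)"

lemma ritz_add_scaleR:
  assumes "f \<in> cdual sc" "x \<in> D" "w \<in> D"
  shows "ritz f (x + t *\<^sub>R w) = ritz f x + 2 * t * Re (a x w - f w) + t\<^sup>2 * energy w"
  using energy_add_scaleR[OF assms(2,3)] cdual_add[OF assms(1)] cdual_scaleR[OF assms(1)]
  unfolding ritz_def by (simp add: algebra_simps)

lemma ritz_bdd_below:
  assumes "f \<in> cdual sc"
  shows "bdd_below (ritz f ` D)"
proof -
  obtain K where K: "\<And>x. cmod (f x) \<le> K * norm x" using cdual_bound[OF assms] by blast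
  have "- (K\<^sup>2 / \<gamma>) \<le> ritz f x" if x: "x \<in> D" for x
  proof -
    have "Re (f x) \<le> K * norm x" using K[of x] complex_Re_le_cmod[of "f x"] by linarith
    moreover have "0 \<le> (\<gamma> * norm x - K)\<^sup>2 / \<gamma>" using gamma_pos by simp
    moreover have "(\<gamma> * norm x - K)\<^sup>2 / \<gamma> = \<gamma> * (norm x)\<^sup>2 - 2 * K * norm x + K\<^sup>2 / \<gamma>"
      using gamma_pos by (simp add: field_simps power2_eq_square)
    ultimately show ?thesis unfolding ritz_def using energy_lower[OF x] by linarith
  qed
  then show ?thesis unfolding bdd_below_def by blast
qed

lemma approx_sol_if_near_minimizer:
  assumes f: "f \<in> cdual sc" and x: "x \<in> D" and near: "\<And>y. y \<in> D \<Longrightarrow> ritz f x \<le> ritz f y + e"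
  shows "approx_sol f x e"
proof -
  have "(cmod (a x w - f w))\<^sup>2 \<le> e * energy w" if w: "w \<in> D" for w
  proof (cases "w = 0")
    case True
    then show ?thesis using cdual_zero[OF f] cdual_zero[OF a_cdual[OF x]] cdual_zero[OF a_cdual[OF zero_in_D]]
      by (simp add: energy_def)
  next
    case False
    define c where "c = cis (Arg (a x w - f w))"
    have w': "sc c w \<in> D" using sc_in_D[OF w] .
    have "a x (sc c w) - f (sc c w) = cnj c * (a x w - f w)"
      using a_right_sc[OF x] cdual_sc[OF f] by (simp add: algebra_simps)
    then have Re_res: "Re (a x (sc c w) - f (sc c w)) = cmod (a x w - f w)"
      unfolding c_def cnj_cis_Arg_mult by simp
    have "energy (sc c w) = energy w" using energy_sc[OF w] by (simp add: c_def)
    then have "0 \<le> e + 2 * t * cmod (a x w - f w) + t\<^sup>2 * energy w" for t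
      using near[OF add_in_D[OF x scaleR_in_D[OF w']], of t] ritz_add_scaleR[OF f x w', of t] Re_res
      by simp
    from discriminant_le[OF energy_pos[OF w False] this] show ?thesis by simp
  qed
  with x show ?thesis unfolding approx_sol_def by blast
qed

lemma exists_approx_sol:
  assumes f: "f \<in> cdual sc" and e: "e > 0"
  obtains x where "approx_sol f x e"
proof -
  have ne: "ritz f ` D \<noteq> {}" using zero_in_D by blast
  have "Inf (ritz f ` D) < Inf (ritz f ` D) + e" using e by simp
  then obtain x where x: "x \<in> D" "ritz f x < Inf (ritz f ` D) + e"
    using cInf_less_iff[OF ne ritz_bdd_below[OF f]] by blast
  have "ritz f x \<le> ritz f y + e" if "y \<in> D" for y
    using x(2) cInf_lower[OF imageI[OF that] ritz_bdd_below[OF f]] by linarith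
  then show thesis using that approx_sol_if_near_minimizer[OF f x(1)] by blast
qed

lemma approx_sol_dist:
  assumes x: "approx_sol f x e" and z: "approx_sol f z d" and "0 \<le> e" "0 \<le> d"
  shows "norm (x - z) \<le> sqrt (2 * (e + d) / \<gamma>)"
proof -
  have xD: "x \<in> D" and zD: "z \<in> D" using x z unfolding approx_sol_def by auto
  define w where "w = x - z"
  have wD: "w \<in> D" unfolding w_def using diff_in_D[OF xD zD] .
  have "complex_of_real (energy w) = (a x w - f w) - (a z w - f w)"
    unfolding w_def using a_diff[OF xD zD] a_self[OF diff_in_D[OF xD zD]] by simp
  then have "(energy w)\<^sup>2 = (cmod ((a x w - f w) + - (a z w - f w)))\<^sup>2"
    by (metis diff_conv_add_uminus norm_of_real power2_abs)
  also have "\<dots> \<le> 2 * ((cmod (a x w - f w))\<^sup>2 + (cmod (a z w - f w))\<^sup>2)"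
    using norm_add_squared_le by (metis norm_minus_cancel)
  also have "\<dots> \<le> 2 * (e + d) * energy w"
    using x z wD unfolding approx_sol_def by (smt (verit) distrib_right)
  finally have "energy w \<le> 2 * (e + d)"
    using square_le_mult_imp_le energy_nonneg[OF wD] assms(3,4) by simp
  then have "(norm w)\<^sup>2 \<le> 2 * (e + d) / \<gamma>"
    using energy_lower[OF wD] gamma_pos by (simp add: pos_le_divide_eq mult.commute)
  then show ?thesis unfolding w_def by (simp add: real_le_rsqrt)
qed

lemma approx_sol_add:
  assumes x: "approx_sol f x e" and z: "approx_sol g z d"
  shows "approx_sol (\<lambda>w. f w + g w) (x + z) (2 * (e + d))"
proof -
  have xD: "x \<in> D" and zD: "z \<in> D" using x z unfolding approx_sol_def by auto
  have "(cmod (a (x + z) w - (f w + g w)))\<^sup>2 \<le> 2 * (e + d) * energy w" if wD: "w \<in> D" for w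
  proof -
    have "a (x + z) w - (f w + g w) = (a x w - f w) + (a z w - g w)" using a_add[OF xD zD] by simp
    then have "(cmod (a (x + z) w - (f w + g w)))\<^sup>2 \<le> 2 * ((cmod (a x w - f w))\<^sup>2 + (cmod (a z w - g w))\<^sup>2)"
      using norm_add_squared_le by metis
    also have "\<dots> \<le> 2 * (e + d) * energy w"
      using x z wD unfolding approx_sol_def by (smt (verit) distrib_right)
    finally show ?thesis .
  qed
  then show ?thesis unfolding approx_sol_def using add_in_D[OF xD zD] by blast
qed

lemma approx_sol_mult:
  assumes x: "approx_sol f x e"
  shows "approx_sol (\<lambda>w. c * f w) (sc c x) ((cmod c)\<^sup>2 * e)"
proof -
  have xD: "x \<in> D" using x unfolding approx_sol_def by auto
  have "(cmod (a (sc c x) w - c * f w))\<^sup>2 \<le> (cmod c)\<^sup>2 * e * energy w" if wD: "w \<in> D" for w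
  proof -
    have "a (sc c x) w - c * f w = c * (a x w - f w)" using a_sc[OF xD] by (simp add: algebra_simps)
    then have "(cmod (a (sc c x) w - c * f w))\<^sup>2 = (cmod c)\<^sup>2 * (cmod (a x w - f w))\<^sup>2"
      by (simp add: norm_mult power_mult_distrib)
    also have "\<dots> \<le> (cmod c)\<^sup>2 * (e * energy w)"
      using x wD unfolding approx_sol_def by (simp add: mult_left_mono)
    finally show ?thesis by (simp add: mult.assoc)
  qed
  then show ?thesis unfolding approx_sol_def using sc_in_D[OF xD] by blast
qed

lemma approx_sol_self: "x \<in> D \<Longrightarrow> approx_sol (a x) x 0"
  unfolding approx_sol_def by simp

lemma approx_sol_energy_bound:
  assumes f: "f \<in> cdual sc" and K: "\<And>x. cmod (f x) \<le> K * norm x"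
    and x: "approx_sol f x e" and e: "e \<le> 1"
  shows "energy x \<le> 2 * (K\<^sup>2 / \<gamma> + 1)"
proof -
  have xD: "x \<in> D" using x unfolding approx_sol_def by auto
  have "(cmod (f x))\<^sup>2 \<le> K\<^sup>2 * (norm x)\<^sup>2"
    using K[of x] by (metis norm_ge_zero power_mono power_mult_distrib)
  also have "\<dots> \<le> K\<^sup>2 / \<gamma> * energy x"
    using mult_left_mono[OF energy_lower[OF xD], of "K\<^sup>2 / \<gamma>"] gamma_pos by simp
  finally have fx: "(cmod (f x))\<^sup>2 \<le> K\<^sup>2 / \<gamma> * energy x" .
  have res: "(cmod (a x x - f x))\<^sup>2 \<le> 1 * energy x"
    using x xD e energy_nonneg[OF xD] unfolding approx_sol_def by (meson mult_right_mono order_trans)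
  have "complex_of_real (energy x) = f x + (a x x - f x)" using a_self[OF xD] by simp
  then have "(energy x)\<^sup>2 = (cmod (f x + (a x x - f x)))\<^sup>2" by (metis norm_of_real power2_abs)
  also have "\<dots> \<le> 2 * ((cmod (f x))\<^sup>2 + (cmod (a x x - f x))\<^sup>2)" by (rule norm_add_squared_le)
  also have "\<dots> \<le> 2 * (K\<^sup>2 / \<gamma> + 1) * energy x" using fx res by (simp add: algebra_simps)
  finally show ?thesis
    using square_le_mult_imp_le energy_nonneg[OF xD] gamma_pos by (simp add: zero_le_divide_iff)
qed

lemma approx_sol_Cauchy:
  assumes X: "\<And>n. approx_sol f (X n) (e n)" and e: "e \<longlonglongrightarrow> 0" "\<And>n. 0 \<le> e n"
  shows "Cauchy X"
  unfolding Cauchy_def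
proof (intro allI impI)
  fix \<epsilon> :: real assume "\<epsilon> > 0"
  then have "\<gamma> * \<epsilon>\<^sup>2 / 4 > 0" using gamma_pos by simp
  then obtain N where N: "\<And>n. n \<ge> N \<Longrightarrow> e n < \<gamma> * \<epsilon>\<^sup>2 / 4"
    using order_tendstoD(2)[OF e(1)] unfolding eventually_sequentially by blast
  have "dist (X m) (X n) < \<epsilon>" if "m \<ge> N" "n \<ge> N" for m n
  proof -
    have "2 * (e m + e n) / \<gamma> < \<epsilon>\<^sup>2"
      using N[OF that(1)] N[OF that(2)] gamma_pos by (simp add: field_simps)
    then have "sqrt (2 * (e m + e n) / \<gamma>) < \<epsilon>"
      using real_sqrt_less_mono \<open>\<epsilon> > 0\<close> by fastforce
    then show ?thesis
      using approx_sol_dist[OF X X e(2) e(2), of m n] by (simp add: dist_norm)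
  qed
  then show "\<exists>M. \<forall>m\<ge>M. \<forall>n\<ge>M. dist (X m) (X n) < \<epsilon>" by blast
qed

definition approx_seq :: "('a \<Rightarrow> complex) \<Rightarrow> nat \<Rightarrow> 'a" where
  "approx_seq f n = (SOME x. approx_sol f x (tol n))"

lemma approx_seq: "f \<in> cdual sc \<Longrightarrow> approx_sol f (approx_seq f n) (tol n)"
  unfolding approx_seq_def by (rule someI_ex) (metis exists_approx_sol tol_pos)

lemma approx_seq_in_D: "f \<in> cdual sc \<Longrightarrow> approx_seq f n \<in> D"
  using approx_seq unfolding approx_sol_def by blast

definition sol :: "('a \<Rightarrow> complex) \<Rightarrow> 'a" where
  "sol f = lim (approx_seq f)"

lemma approx_seq_LIMSEQ: "f \<in> cdual sc \<Longrightarrow> approx_seq f \<longlonglongrightarrow> sol f"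
  unfolding sol_def
  by (rule convergent_LIMSEQ_iff[THEN iffD1], rule Cauchy_convergent,
      rule approx_sol_Cauchy[OF approx_seq tol_LIMSEQ]) (simp_all add: less_imp_le[OF tol_pos])

lemma approx_sol_LIMSEQ:
  assumes f: "f \<in> cdual sc" and X: "\<And>n. approx_sol f (X n) (e n)"
    and e: "e \<longlonglongrightarrow> 0" "\<And>n. 0 \<le> e n"
  shows "X \<longlonglongrightarrow> sol f"
proof -
  have "(\<lambda>n. X n - approx_seq f n) \<longlonglongrightarrow> 0"
  proof (rule Lim_null_comparison)
    show "\<forall>\<^sub>F n in sequentially. norm (X n - approx_seq f n) \<le> sqrt (2 * (e n + tol n) / \<gamma>)"
      using approx_sol_dist[OF X approx_seq[OF f] e(2) less_imp_le[OF tol_pos]] by simp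
    have "(\<lambda>n. 2 * (e n + tol n) / \<gamma>) \<longlonglongrightarrow> 0"
      by (intro tendsto_divide_zero tendsto_mult_right_zero tendsto_add_zero e(1) tol_LIMSEQ)
    then show "(\<lambda>n. sqrt (2 * (e n + tol n) / \<gamma>)) \<longlonglongrightarrow> 0"
      using tendsto_real_sqrt by fastforce
  qed
  from tendsto_add[OF this approx_seq_LIMSEQ[OF f]] show ?thesis by simp
qed

lemma sol_add:
  assumes f: "f \<in> cdual sc" and g: "g \<in> cdual sc"
  shows "sol (\<lambda>w. f w + g w) = sol f + sol g"
proof -
  let ?e = "\<lambda>n. 2 * (tol n + tol n)"
  have "(\<lambda>n. approx_seq f n + approx_seq g n) \<longlonglongrightarrow> sol (\<lambda>w. f w + g w)"
    by (rule approx_sol_LIMSEQ[OF cdual_add_closed[OF f g] approx_sol_add[OF approx_seq[OF f] approx_seq[OF g]]])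
      (auto intro!: tendsto_mult_right_zero tendsto_add_zero tol_LIMSEQ simp: less_imp_le[OF tol_pos])
  moreover have "(\<lambda>n. approx_seq f n + approx_seq g n) \<longlonglongrightarrow> sol f + sol g"
    by (intro tendsto_add approx_seq_LIMSEQ f g)
  ultimately show ?thesis using LIMSEQ_unique by blast
qed

lemma sol_mult:
  assumes f: "f \<in> cdual sc"
  shows "sol (\<lambda>w. c * f w) = sc c (sol f)"
proof -
  have "(\<lambda>n. sc c (approx_seq f n)) \<longlonglongrightarrow> sol (\<lambda>w. c * f w)"
    by (rule approx_sol_LIMSEQ[OF cdual_mult_closed[OF f] approx_sol_mult[OF approx_seq[OF f]]])
      (auto intro!: tendsto_mult_right_zero tendsto_add_zero tol_LIMSEQ simp: less_imp_le[OF tol_pos])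
  moreover have "(\<lambda>n. sc c (approx_seq f n)) \<longlonglongrightarrow> sc c (sol f)"
    by (rule bounded_linear.tendsto[OF bounded_linear_sc approx_seq_LIMSEQ[OF f]])
  ultimately show ?thesis using LIMSEQ_unique by blast
qed

lemma sol_a:
  assumes "x \<in> D"
  shows "sol (a x) = x"
proof -
  have "(\<lambda>_. x) \<longlonglongrightarrow> sol (a x)"
    by (rule approx_sol_LIMSEQ[where e="\<lambda>_. 0"]) (simp_all add: a_cdual approx_sol_self assms)
  then show ?thesis by (simp add: LIMSEQ_const_iff)
qed

lemma approx_seq_energy_bounded:
  assumes f: "f \<in> cdual sc"
  obtains M where "0 \<le> M" "\<And>n. energy (approx_seq f n) \<le> M"
proof -
  obtain K where K: "\<And>x. cmod (f x) \<le> K * norm x" using cdual_bound[OF f] by blast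
  have "energy (approx_seq f n) \<le> 2 * (K\<^sup>2 / \<gamma> + 1)" for n
    by (rule approx_sol_energy_bound[OF f K approx_seq[OF f] tol_le_1])
  moreover have "0 \<le> 2 * (K\<^sup>2 / \<gamma> + 1)" using gamma_pos by simp
  ultimately show thesis using that by blast
qed

lemma residual_tendsto_zero:
  assumes f: "f \<in> cdual sc" and g: "g \<in> cdual sc"
  shows "(\<lambda>n. a (approx_seq f n) (approx_seq g n) - f (approx_seq g n)) \<longlonglongrightarrow> 0"
proof -
  obtain M where M: "0 \<le> M" "\<And>n. energy (approx_seq g n) \<le> M"
    using approx_seq_energy_bounded[OF g] by blast
  have "(cmod (a (approx_seq f n) (approx_seq g n) - f (approx_seq g n)))\<^sup>2 \<le> tol n * M" for n
    using approx_seq[OF f, of n] approx_seq_in_D[OF g, of n] M(2)[of n]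
    unfolding approx_sol_def by (meson less_imp_le[OF tol_pos] mult_left_mono order_trans)
  then show ?thesis
    by (rule squared_norm_bound_tendsto_zero[OF _ tol_LIMSEQ M(1)])
qed

lemma sol_represents:
  assumes f: "f \<in> cdual sc" and w: "w \<in> D"
  shows "f w = cnj (a w (sol f))"
proof -
  have "(\<lambda>n. a (approx_seq f n) w - f w) \<longlonglongrightarrow> 0"
    using approx_seq[OF f] w unfolding approx_sol_def
    by (intro squared_norm_bound_tendsto_zero[OF _ tol_LIMSEQ energy_nonneg[OF w]]) blast
  moreover have "(\<lambda>n. a (approx_seq f n) w) \<longlonglongrightarrow> cnj (a w (sol f))"
    using tendsto_cnj[OF bounded_linear.tendsto[OF cdual_bounded_linear[OF a_cdual[OF w]] approx_seq_LIMSEQ[OF f]]]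
    by (simp add: a_hermitian[OF approx_seq_in_D[OF f] w])
  ultimately have "(\<lambda>n. f w) \<longlonglongrightarrow> cnj (a w (sol f)) - 0"
    by (rule tendsto_diff[rotated, THEN tendsto_cong[THEN iffD1, rotated]]) simp
  then show ?thesis by (simp add: LIMSEQ_const_iff)
qed

lemma sol_inj:
  assumes "f \<in> cdual sc" "g \<in> cdual sc" "sol f = sol g"
  shows "f = g"
  using assms by (intro cdual_eq_on_dense[OF _ _ dense]) (simp_all add: sol_represents)

lemma sol_sym:
  assumes f: "f \<in> cdual sc" and g: "g \<in> cdual sc"
  shows "g (sol f) = cnj (f (sol g))"
proof -
  have "(\<lambda>n. cnj (a (approx_seq f n) (approx_seq g n) - f (approx_seq g n)) -
        (a (approx_seq g n) (approx_seq f n) - g (approx_seq f n))) \<longlonglongrightarrow> cnj 0 - 0"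
    by (intro tendsto_intros residual_tendsto_zero f g)
  moreover have "cnj (a (approx_seq f n) (approx_seq g n) - f (approx_seq g n)) -
      (a (approx_seq g n) (approx_seq f n) - g (approx_seq f n)) = g (approx_seq f n) - cnj (f (approx_seq g n))" for n
    using a_hermitian[OF approx_seq_in_D[OF g] approx_seq_in_D[OF f], of n n] by simp
  ultimately have "(\<lambda>n. g (approx_seq f n) - cnj (f (approx_seq g n))) \<longlonglongrightarrow> 0" by simp
  moreover have "(\<lambda>n. g (approx_seq f n) - cnj (f (approx_seq g n))) \<longlonglongrightarrow> g (sol f) - cnj (f (sol g))"
    by (intro tendsto_intros bounded_linear.tendsto[OF cdual_bounded_linear] approx_seq_LIMSEQ f g)
  ultimately show ?thesis using LIMSEQ_unique by fastforce
qed

lemma sol_coercive: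
  assumes f: "f \<in> cdual sc"
  shows "Im (f (sol f)) = 0" "\<gamma> * (norm (sol f))\<^sup>2 \<le> Re (f (sol f))"
proof -
  have "(\<lambda>n. (a (approx_seq f n) (approx_seq f n) - f (approx_seq f n)) + f (approx_seq f n)) \<longlonglongrightarrow> 0 + f (sol f)"
    by (intro tendsto_add residual_tendsto_zero bounded_linear.tendsto[OF cdual_bounded_linear] approx_seq_LIMSEQ f)
  then have lim: "(\<lambda>n. complex_of_real (energy (approx_seq f n))) \<longlonglongrightarrow> f (sol f)"
    by (simp add: a_self[OF approx_seq_in_D[OF f]])
  from tendsto_Im[OF lim] show "Im (f (sol f)) = 0" by (simp add: LIMSEQ_const_iff)
  have "(\<lambda>n. energy (approx_seq f n)) \<longlonglongrightarrow> Re (f (sol f))" using tendsto_Re[OF lim] by simp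
  moreover have "(\<lambda>n. \<gamma> * (norm (approx_seq f n))\<^sup>2) \<longlonglongrightarrow> \<gamma> * (norm (sol f))\<^sup>2"
    by (intro tendsto_intros approx_seq_LIMSEQ f)
  moreover have "\<forall>\<^sub>F n in sequentially. \<gamma> * (norm (approx_seq f n))\<^sup>2 \<le> energy (approx_seq f n)"
    by (intro always_eventually allI energy_lower approx_seq_in_D f)
  ultimately show "\<gamma> * (norm (sol f))\<^sup>2 \<le> Re (f (sol f))"
    by (intro tendsto_le) simp_all
qed

definition friedrichs_dom :: "'a set" where
  "friedrichs_dom = sol ` cdual sc"

definition friedrichs_op :: "'a \<Rightarrow> 'a \<Rightarrow> complex" where
  "friedrichs_op = inv_into (cdual sc) sol"

lemma friedrichs_op_sol: "f \<in> cdual sc \<Longrightarrow> friedrichs_op (sol f) = f"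
  unfolding friedrichs_op_def by (rule inv_into_f_f) (auto intro: inj_onI sol_inj)

lemma sol_in_friedrichs_dom: "f \<in> cdual sc \<Longrightarrow> sol f \<in> friedrichs_dom"
  unfolding friedrichs_dom_def by blast

lemma friedrichs_domE:
  assumes "y \<in> friedrichs_dom"
  obtains f where "f \<in> cdual sc" "y = sol f"
  using assms unfolding friedrichs_dom_def by blast

lemma D_subset_friedrichs_dom: "D \<subseteq> friedrichs_dom"
  using sol_in_friedrichs_dom[OF a_cdual] sol_a by force

lemma friedrichs_op_extends: "x \<in> D \<Longrightarrow> friedrichs_op x = a x"
  using friedrichs_op_sol[OF a_cdual] sol_a by force

lemma densely_defined_friedrichs_dom: "densely_defined friedrichs_dom"
  using dense closure_mono[OF D_subset_friedrichs_dom] unfolding densely_defined_def by blast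

lemma dual_operator_friedrichs: "dual_operator sc friedrichs_dom friedrichs_op"
  unfolding dual_operator_def
proof (intro conjI ballI allI)
  show "0 \<in> friedrichs_dom" using zero_in_D D_subset_friedrichs_dom by blast
next
  fix x y assume "x \<in> friedrichs_dom" "y \<in> friedrichs_dom"
  then obtain f g where fg: "f \<in> cdual sc" "g \<in> cdual sc" "x = sol f" "y = sol g"
    by (metis friedrichs_domE)
  then have xy: "x + y = sol (\<lambda>w. f w + g w)" using sol_add by simp
  show "x + y \<in> friedrichs_dom" unfolding xy by (intro sol_in_friedrichs_dom cdual_add_closed fg)
  show "friedrichs_op (x + y) = (\<lambda>z. friedrichs_op x z + friedrichs_op y z)"
    unfolding xy using fg by (simp add: friedrichs_op_sol cdual_add_closed)
next
  fix c x assume "x \<in> friedrichs_dom"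
  then obtain f where f: "f \<in> cdual sc" "x = sol f" by (rule friedrichs_domE)
  then have cx: "sc c x = sol (\<lambda>w. c * f w)" using sol_mult by simp
  show "sc c x \<in> friedrichs_dom" unfolding cx by (intro sol_in_friedrichs_dom cdual_mult_closed f)
  show "friedrichs_op (sc c x) = (\<lambda>z. c * friedrichs_op x z)"
    unfolding cx using f by (simp add: friedrichs_op_sol cdual_mult_closed)
next
  fix x assume "x \<in> friedrichs_dom"
  then show "friedrichs_op x \<in> cdual sc" by (metis friedrichs_domE friedrichs_op_sol)
qed

lemma lower_bound_friedrichs: "lower_bound friedrichs_dom friedrichs_op \<gamma>"
  unfolding lower_bound_def by (metis friedrichs_domE friedrichs_op_sol sol_coercive)

lemma friedrichs_op_hermitian:
  assumes "x \<in> friedrichs_dom" "y \<in> friedrichs_dom"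
  shows "friedrichs_op x y = cnj (friedrichs_op y x)"
  using assms by (metis friedrichs_domE friedrichs_op_sol sol_sym)

lemma adj_dom_friedrichs_subset: "adj_dom friedrichs_dom friedrichs_op \<subseteq> friedrichs_dom"
proof
  fix y assume "y \<in> adj_dom friedrichs_dom friedrichs_op"
  then obtain K where K: "\<And>x. x \<in> friedrichs_dom \<Longrightarrow> cmod (friedrichs_op x y) \<le> K * norm x"
    unfolding adj_dom_def by blast
  note A = dual_operator_friedrichs[unfolded dual_operator_def]
  obtain h where h: "h \<in> cdual sc" "\<And>x. x \<in> friedrichs_dom \<Longrightarrow> h x = cnj (friedrichs_op x y)"
  proof (rule cdual_extension[where S = friedrichs_dom and w = "\<lambda>x. cnj (friedrichs_op x y)"])
    show "0 \<in> friedrichs_dom" "\<And>x z. x \<in> friedrichs_dom \<Longrightarrow> z \<in> friedrichs_dom \<Longrightarrow> x + z \<in> friedrichs_dom"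
      "\<And>c x. x \<in> friedrichs_dom \<Longrightarrow> sc c x \<in> friedrichs_dom"
      using A by blast+
    show "\<And>x z. x \<in> friedrichs_dom \<Longrightarrow> z \<in> friedrichs_dom \<Longrightarrow>
        cnj (friedrichs_op (x + z) y) = cnj (friedrichs_op x y) + cnj (friedrichs_op z y)"
      "\<And>c x. x \<in> friedrichs_dom \<Longrightarrow> cnj (friedrichs_op (sc c x) y) = cnj c * cnj (friedrichs_op x y)"
      using A by simp_all
    show "\<And>x. x \<in> friedrichs_dom \<Longrightarrow> cmod (cnj (friedrichs_op x y)) \<le> K * norm x" using K by simp
  qed blast
  have "g (sol h - y) = 0" if g: "g \<in> cdual sc" for g
  proof -
    have "g (sol h) = cnj (h (sol g))" by (rule sol_sym[OF h(1) g])
    also have "\<dots> = g y"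
      using h(2)[OF sol_in_friedrichs_dom[OF g]] friedrichs_op_sol[OF g] by simp
    finally show ?thesis using linear_diff[OF bounded_linear.linear[OF cdual_bounded_linear[OF g]]] by simp
  qed
  then have "sol h = y" using cdual_separates by (metis eq_iff_diff_eq_0)
  then show "y \<in> friedrichs_dom" using sol_in_friedrichs_dom[OF h(1)] by simp
qed

lemma self_adjoint_friedrichs: "self_adjoint sc friedrichs_dom friedrichs_op"
  using dual_operator_friedrichs friedrichs_op_hermitian adj_dom_friedrichs_subset
  by (rule self_adjointI)

end

lemma lower_bound_imp_positive_op: "lower_bound D A \<gamma> \<Longrightarrow> 0 \<le> \<gamma> \<Longrightarrow> positive_op D A"
  unfolding lower_bound_def positive_op_def by (meson mult_nonneg_nonneg order_trans zero_le_power2)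

theorem theorem2:
  fixes sc :: "complex \<Rightarrow> 'a::banach \<Rightarrow> 'a"
    and D :: "'a set" and a :: "'a \<Rightarrow> 'a \<Rightarrow> complex" and \<gamma> :: real
  assumes "complex_scaling sc"
    and "reflexive_space sc TYPE('a)"
    and "dual_operator sc D a"
    and "densely_defined D"
    and "positive_op D a"
    and "\<gamma> > 0"
    and "lower_bound D a \<gamma>"
  shows "\<exists>D' A. dual_operator sc D' A \<and> densely_defined D' \<and> D \<subseteq> D' \<and> (\<forall>x\<in>D. A x = a x) \<and>
           positive_op D' A \<and> self_adjoint sc D' A \<and> lower_bound D' A \<gamma>"
proof -
  interpret friedrichs sc D a \<gamma>
    using assms unfolding friedrichs_def friedrichs_axioms_def complex_structure_def by blast
  show ?thesis
  proof (intro exI conjI ballI)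
    show "dual_operator sc friedrichs_dom friedrichs_op" by (rule dual_operator_friedrichs)
    show "densely_defined friedrichs_dom" by (rule densely_defined_friedrichs_dom)
    show "D \<subseteq> friedrichs_dom" by (rule D_subset_friedrichs_dom)
    show "friedrichs_op x = a x" if "x \<in> D" for x using that by (rule friedrichs_op_extends)
    show "positive_op friedrichs_dom friedrichs_op"
      using lower_bound_friedrichs gamma_pos by (simp add: lower_bound_imp_positive_op)
    show "self_adjoint sc friedrichs_dom friedrichs_op" by (rule self_adjoint_friedrichs)
    show "lower_bound friedrichs_dom friedrichs_op \<gamma>" by (rule lower_bound_friedrichs)
  qed
qed

end
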